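(* Let $\{\ket{j}\}_{j=0}^{7}$ be the computational basis of three qubits, where $\ket{j}=\ket{j_1j_2j_3}$ with $j=4j_1+2j_2+j_3$, and let $$\ket{\psi_2}=\frac{1}{4\sqrt{2}}\left(\ket{0}+\ket{1}+\ket{2}+\ket{3}+\ket{4}+\ket{5}+\ket{6}+5\ket{7}\right),\qquad \rho_2=\ket{\psi_2}\bra{\psi_2}.$$ Denote by $A_2,B_2,C_2$ the first, second and third qubits of $\rho_2$. Then $$D(B_2C_2|A_2)=D(A_2C_2|B_2)=D(A_2B_2|C_2)=D(C_2|A_2B_2)=D(B_2|A_2C_2)=D(A_2|B_2C_2)$$ $$=-\tfrac{1}{8}(4+\sqrt{13})\log\left(\tfrac{1}{8}(4+\sqrt{13})\right)-\tfrac{1}{8}(4-\sqrt{13})\log\left(\tfrac{1}{8}(4-\sqrt{13})\right)\approx 0.28.$$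
   Context: Logarithms are base 2, and $S(\sigma)=-\mathrm{Tr}(\sigma\log\sigma)$ is the von Neumann entropy. For a state $\rho_{XY}$ on a bipartite system $X\otimes Y$ (here $X$ and $Y$ are complementary groups of the three qubits), the quantum discord with measurement on $X$ is $$D(Y|X)=\min_{\{E_a\}}\sum_a p_a S(\rho_{Y|a})+S(\rho_X)-S(\rho_{XY}),$$ where the minimum is over all POVMs $\{E_a\}$ on $X$ ($E_a\ge 0$, $\sum_a E_a=I$), $p_a=\mathrm{Tr}((E_a\otimes I)\rho_{XY})$, $\rho_{Y|a}=\mathrm{Tr}_X((E_a\otimes I)\rho_{XY})/p_a$, and $\rho_X,\rho_Y$ are reduced states. For example $D(B_2C_2|A_2)$ is the discord of $\rho_2$ viewed as a state on $A_2\otimes(B_2C_2)$ with measurement on $A_2$. *)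

theory Defs
  imports "Jordan_Normal_Form.Matrix" "Jordan_Normal_Form.Char_Poly"
          "Jordan_Normal_Form.Schur_Decomposition"
begin

text \<open>Eigenvalues of a square complex matrix, with algebraic multiplicity, are the roots of its
  characteristic polynomial. For a density matrix these are real and nonnegative;
  S(sigma) = - sum over eigenvalues of lambda log2 lambda, with 0 log 0 = 0.\<close>

definition xlogx :: "real \<Rightarrow> real" where
  "xlogx x = (if x = 0 then 0 else x * log 2 x)"

definition vn_entropy :: "complex mat \<Rightarrow> real" where
  "vn_entropy \<sigma> = - sum_mset (image_mset (\<lambda>e. xlogx (Re e)) (proots (char_poly \<sigma>)))"

text \<open>Qubits are numbered 0 (first, A), 1 (second, B), 2 (third, C).\<close>

definition qbit :: "nat \<Rightarrow> nat \<Rightarrow> nat" where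
  "qbit j k = (j div 2 ^ (2 - k)) mod 2"

definition sub_idx :: "nat list \<Rightarrow> nat \<Rightarrow> nat" where
  "sub_idx X j = (\<Sum>t<length X. qbit j (X ! t) * 2 ^ (length X - 1 - t))"

definition compl_qubits :: "nat list \<Rightarrow> nat list" where
  "compl_qubits X = [k \<leftarrow> [0,1,2]. k \<notin> set X]"

text \<open>Partial trace over the qubits in X of an 8x8 matrix; result lives on the complement.\<close>
definition ptrace :: "nat list \<Rightarrow> complex mat \<Rightarrow> complex mat" where
  "ptrace X M = (let Y = compl_qubits X in
     mat (2 ^ length Y) (2 ^ length Y) (\<lambda>(y, y').
       \<Sum>j<8. \<Sum>j'<8. if sub_idx Y j = y \<and> sub_idx Y j' = y' \<and> sub_idx X j = sub_idx X j'
                       then M $$ (j, j') else 0))"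

text \<open>The operator E \<otimes> I on the three qubits, E acting on the qubits X.\<close>
definition embed_op :: "nat list \<Rightarrow> complex mat \<Rightarrow> complex mat" where
  "embed_op X E = (let Y = compl_qubits X in
     mat 8 8 (\<lambda>(j, j'). if sub_idx Y j = sub_idx Y j' then E $$ (sub_idx X j, sub_idx X j') else 0))"

definition psd_mat :: "nat \<Rightarrow> complex mat \<Rightarrow> bool" where
  "psd_mat d E \<longleftrightarrow> E \<in> carrier_mat d d \<and> mat_adjoint E = E \<and>
     (\<forall>v \<in> carrier_vec d. Im (v \<bullet>c (E *\<^sub>v v)) = 0 \<and> 0 \<le> Re (v \<bullet>c (E *\<^sub>v v)))"

definition povm :: "nat \<Rightarrow> complex mat list \<Rightarrow> bool" where
  "povm d Es \<longleftrightarrow> (\<forall>E \<in> set Es. psd_mat d E) \<and>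
     (\<forall>i<d. \<forall>j<d. (\<Sum>a<length Es. Es ! a $$ (i, j)) = (if i = j then 1 else 0))"

definition mtrace :: "complex mat \<Rightarrow> complex" where
  "mtrace M = (\<Sum>i<dim_row M. M $$ (i, i))"

section \<open>Quantum discord D(Y|X) with measurement on the qubits X\<close>

definition meas_prob :: "nat list \<Rightarrow> complex mat \<Rightarrow> complex mat \<Rightarrow> real" where
  "meas_prob X \<rho> E = Re (mtrace (embed_op X E * \<rho>))"

definition post_state :: "nat list \<Rightarrow> complex mat \<Rightarrow> complex mat \<Rightarrow> complex mat" where
  "post_state X \<rho> E = complex_of_real (1 / meas_prob X \<rho> E) \<cdot>\<^sub>m ptrace X (embed_op X E * \<rho>)"

definition discord :: "nat list \<Rightarrow> complex mat \<Rightarrow> real" where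
  "discord X \<rho> =
     (INF Es \<in> {Es. povm (2 ^ length X) Es}.
        \<Sum>a<length Es. meas_prob X \<rho> (Es ! a) * vn_entropy (post_state X \<rho> (Es ! a)))
     + vn_entropy (ptrace (compl_qubits X) \<rho>) - vn_entropy \<rho>"

definition psi2 :: "complex vec" where
  "psi2 = vec 8 (\<lambda>j. (if j = 7 then 5 else 1) / (4 * complex_of_real (sqrt 2)))"

definition rho2 :: "complex mat" where
  "rho2 = mat 8 8 (\<lambda>(i, j). psi2 $ i * cnj (psi2 $ j))"

end

theory Submission
  imports Defs
begin

(* rho_2 is pure.  Measuring the qubits X of a pure state in the computational basis
   leaves the remaining qubits in pure states of entropy zero, while every POVM gives a nonnegative
   average entropy; so the infimum in D(Y|X) is 0 and D(Y|X) = S(rho_X).  All one-qubit marginals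
   of rho_2 coincide, as do all two-qubit marginals, and both matrices R satisfy
   R^3 + (3/64) R = R^2, so their eigenvalues lie in {0, (4 + sqrt 13)/8, (4 - sqrt 13)/8}.
   Since the trace is 1 and sqrt 13 is irrational, each nonzero eigenvalue occurs exactly once. *)

section \<open>Spectra and von Neumann entropy\<close>

lemma mtrace_mult_comm:
  fixes A B :: "complex mat"
  assumes "A \<in> carrier_mat n m" "B \<in> carrier_mat m n"
  shows "mtrace (A * B) = mtrace (B * A)"
proof -
  have "mtrace (A * B) = (\<Sum>i<n. \<Sum>k<m. A $$ (i, k) * B $$ (k, i))"
    using assms by (simp add: mtrace_def scalar_prod_def atLeast0LessThan)
  also have "\<dots> = (\<Sum>k<m. \<Sum>i<n. B $$ (k, i) * A $$ (i, k))"
    by (subst sum.swap) (simp add: mult.commute)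
  also have "\<dots> = mtrace (B * A)"
    using assms by (simp add: mtrace_def scalar_prod_def atLeast0LessThan)
  finally show ?thesis .
qed

lemma mtrace_smult: "A \<in> carrier_mat n n \<Longrightarrow> mtrace (c \<cdot>\<^sub>m A) = c * mtrace A"
  unfolding mtrace_def by (auto simp: sum_distrib_left)

lemma proots_prod_linear_factors: "proots (\<Prod>a\<leftarrow>as. [:- a, 1:]) = mset (as :: 'a :: idom list)"
proof (induction as)
  case (Cons a as)
  have "(\<Prod>a\<leftarrow>as. [:- a, 1:]) \<noteq> 0"
    by (auto simp: prod_list_zero_iff)
  then have "proots ([:- a, 1:] * (\<Prod>a\<leftarrow>as. [:- a, 1:])) = proots [:- a, 1:] + mset as"
    using Cons.IH by (subst proots_mult) auto
  then show ?case
    by (simp del: mult_pCons_left)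
qed simp

lemma sum_proots_char_poly:
  fixes A :: "complex mat"
  assumes A: "A \<in> carrier_mat n n"
  shows "sum_mset (proots (char_poly A)) = mtrace A"
proof -
  obtain es where cp: "char_poly A = (\<Prod>a\<leftarrow>es. [:- a, 1:])"
    using char_poly_factorized[OF A] by blast
  have roots: "proots (char_poly A) = mset es"
    unfolding cp by (rule proots_prod_linear_factors)
  obtain B P Q where sch: "schur_decomposition A es = (B, P, Q)"
    by (cases "schur_decomposition A es") auto
  from schur_decomposition[OF A cp sch]
  have sim: "similar_mat_wit A B P Q" and diag: "diag_mat B = es" by auto
  from sim A have B: "B \<in> carrier_mat n n" and P: "P \<in> carrier_mat n n" and Q: "Q \<in> carrier_mat n n"
    and "Q * P = 1\<^sub>m n" and "A = P * B * Q"
    unfolding similar_mat_wit_def Let_def by auto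
  then have "mtrace A = mtrace ((B * Q) * P)"
    using mtrace_mult_comm[of P n n "B * Q"] by (simp add: assoc_mult_mat[of P n n B n Q])
  also have "\<dots> = mtrace B"
    using B P Q \<open>Q * P = 1\<^sub>m n\<close> by (simp add: assoc_mult_mat)
  also have "\<dots> = sum_list es"
    using B unfolding diag[symmetric] mtrace_def diag_mat_def
    by (simp add: sum_list_sum_nth atLeast0LessThan)
  finally show ?thesis
    using roots by (simp add: sum_mset_sum_list)
qed

lemma eigenvalue_if_in_proots_char_poly:
  fixes A :: "complex mat"
  assumes "A \<in> carrier_mat n n" and "e \<in># proots (char_poly A)"
  shows "eigenvalue A e"
  using assms by (cases "char_poly A = 0") (auto simp: eigenvalue_root_char_poly)

lemma eigenvalue_cubic_identity:
  fixes A :: "'a :: field mat"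
  assumes A: "A \<in> carrier_mat n n" and cubic: "A * (A * A) + c \<cdot>\<^sub>m A = A * A"
    and "eigenvalue A e"
  shows "e * e * e + c * e = e * e"
proof -
  obtain v where v: "v \<in> carrier_vec n" and "v \<noteq> 0\<^sub>v n" and Av: "A *\<^sub>v v = e \<cdot>\<^sub>v v"
    using assms unfolding eigenvalue_def eigenvector_def by auto
  then obtain i where i: "i < n" and "v $ i \<noteq> 0"
    by (metis eq_vecI carrier_vecD index_zero_vec)
  have AAv: "(A * A) *\<^sub>v v = (e * e) \<cdot>\<^sub>v v"
    using A v Av by (simp add: mult_mat_vec smult_smult_assoc)
  have "(A * (A * A)) *\<^sub>v v = A *\<^sub>v ((e * e) \<cdot>\<^sub>v v)"
    using A v AAv by (simp add: assoc_mult_mat_vec[of A n n "A * A" n v])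
  also have "\<dots> = (e * e * e) \<cdot>\<^sub>v v"
    using A v Av by (simp add: mult_mat_vec smult_smult_assoc mult.commute)
  finally have AAAv: "(A * (A * A)) *\<^sub>v v = (e * e * e) \<cdot>\<^sub>v v" .
  have "((A * (A * A) + c \<cdot>\<^sub>m A) *\<^sub>v v) $ i = ((A * (A * A)) *\<^sub>v v) $ i + c * (A *\<^sub>v v) $ i"
    using A v i
    by (simp add: add_scalar_prod_distrib[of _ n] scalar_prod_def sum_distrib_left distrib_right
        sum.distrib mult.assoc)
  then have "e * e * e * v $ i + c * (e * v $ i) = e * e * v $ i"
    using cubic AAv AAAv Av i v by simp
  then have "(e * e * e + c * e) * v $ i = (e * e) * v $ i"
    by (simp add: algebra_simps)
  then show ?thesis
    using \<open>v $ i \<noteq> 0\<close> by simp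
qed

lemma eigenvalue_cubic_identity_roots:
  fixes A :: "'a :: field mat"
  assumes A: "A \<in> carrier_mat n n" and cubic: "A * (A * A) + (a * (1 - a)) \<cdot>\<^sub>m A = A * A"
    and "eigenvalue A e"
  shows "e \<in> {0, a, 1 - a}"
proof -
  have "e * ((e - a) * (e - (1 - a))) = e * e * e + a * (1 - a) * e - e * e"
    by (simp add: algebra_simps)
  also have "\<dots> = 0"
    using eigenvalue_cubic_identity[OF A cubic \<open>eigenvalue A e\<close>] by simp
  finally show ?thesis
    by auto
qed

(* The quadratic-form half of psd_mat, without hermiticity (which over the complex numbers it
   implies anyway); it is all that the spectral bounds need and is easy to check for
   post-measurement states. *)
definition psd_form :: "nat \<Rightarrow> complex mat \<Rightarrow> bool" where
  "psd_form n A \<longleftrightarrow> A \<in> carrier_mat n n \<and>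
     (\<forall>v \<in> carrier_vec n. Im (v \<bullet>c (A *\<^sub>v v)) = 0 \<and> 0 \<le> Re (v \<bullet>c (A *\<^sub>v v)))"

lemma psd_form_smult:
  assumes A: "psd_form n A" and "0 \<le> c"
  shows "psd_form n (complex_of_real c \<cdot>\<^sub>m A)"
proof -
  have Ac: "A \<in> carrier_mat n n"
    using A unfolding psd_form_def by simp
  have "v \<bullet>c ((complex_of_real c \<cdot>\<^sub>m A) *\<^sub>v v) = complex_of_real c * (v \<bullet>c (A *\<^sub>v v))"
    if "v \<in> carrier_vec n" for v
    using Ac that by (simp add: scalar_prod_def sum_distrib_left ac_simps)
  then show ?thesis
    using assms unfolding psd_form_def by simp
qed

lemma psd_form_diag:
  assumes A: "psd_form n A" and i: "i < n"
  shows "Im (A $$ (i, i)) = 0 \<and> 0 \<le> Re (A $$ (i, i))"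
proof -
  have Ac: "A \<in> carrier_mat n n"
    using A unfolding psd_form_def by simp
  have "unit_vec n i \<bullet>c (A *\<^sub>v unit_vec n i) = conjugate (A *\<^sub>v unit_vec n i) $ i"
    using Ac i by (intro scalar_prod_left_unit) auto
  also have "\<dots> = cnj (A $$ (i, i))"
    using Ac i by simp
  finally show ?thesis
    using A i unfolding psd_form_def by (metis cnj.sel unit_vec_carrier neg_equal_0_iff_equal)
qed

lemma psd_form_mtrace:
  assumes "psd_form n A"
  shows "Im (mtrace A) = 0 \<and> 0 \<le> Re (mtrace A)"
  using assms psd_form_diag[OF assms] unfolding psd_form_def mtrace_def
  by (auto simp: Im_sum Re_sum intro!: sum_nonneg)

lemma psd_form_eigenvalue:
  assumes A: "psd_form n A" and "eigenvalue A e"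
  shows "Im e = 0 \<and> 0 \<le> Re e"
proof -
  obtain v where v: "v \<in> carrier_vec n" and "v \<noteq> 0\<^sub>v n" and "A *\<^sub>v v = e \<cdot>\<^sub>v v"
    using assms unfolding psd_form_def eigenvalue_def eigenvector_def by auto
  then have "v \<bullet>c (A *\<^sub>v v) = cnj e * (v \<bullet>c v)"
    by (simp add: scalar_prod_def sum_distrib_left algebra_simps)
  moreover have "Im (v \<bullet>c v) = 0" and "0 < Re (v \<bullet>c v)"
    using conjugate_square_greater_0_vec[OF v] \<open>v \<noteq> 0\<^sub>v n\<close> v by (auto simp: less_complex_def)
  ultimately show ?thesis
    using A v unfolding psd_form_def by (auto simp: zero_le_mult_iff)
qed

lemma Re_sum_mset: "Re (sum_mset M) = sum_mset (image_mset Re M)"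
  by (induction M) auto

lemma sum_mset_eq_sum_count:
  fixes f :: "'a \<Rightarrow> 'b :: comm_semiring_1"
  assumes "finite S" and "set_mset M \<subseteq> S"
  shows "(\<Sum>x\<in>#M. f x) = (\<Sum>s\<in>S. of_nat (count M s) * f s)"
  using assms(2)
proof (induction M)
  case (add x M)
  then have "x \<in> S" and "set_mset M \<subseteq> S"
    by auto
  have "(\<Sum>s\<in>S. of_nat (count (add_mset x M) s) * f s)
      = (\<Sum>s\<in>S. of_nat (count M s) * f s + (if s = x then f s else 0))"
    by (intro sum.cong) (auto simp: distrib_right add.commute)
  also have "\<dots> = (\<Sum>s\<in>S. of_nat (count M s) * f s) + f x"
    using assms(1) \<open>x \<in> S\<close> by (simp add: sum.distrib)
  finally show ?case
    using add.IH \<open>set_mset M \<subseteq> S\<close> by (simp add: add.commute)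
qed simp

lemma vn_entropy_nonneg:
  assumes A: "psd_form n A" and tr: "mtrace A = 1"
  shows "0 \<le> vn_entropy A"
proof -
  let ?M = "proots (char_poly A)"
  have Ac: "A \<in> carrier_mat n n"
    using A unfolding psd_form_def by simp
  have eig: "Im e = 0 \<and> 0 \<le> Re e" if "e \<in># ?M" for e
    using psd_form_eigenvalue[OF A eigenvalue_if_in_proots_char_poly[OF Ac that]] .
  have total: "(\<Sum>e\<in>#?M. Re e) = 1"
    using sum_proots_char_poly[OF Ac] tr Re_sum_mset[of ?M] by simp
  have "xlogx (Re e) \<le> 0" if e: "e \<in># ?M" for e
  proof -
    have "(\<Sum>x\<in>#?M. if x = e then Re x else 0) \<le> (\<Sum>x\<in>#?M. Re x)"
      using eig by (intro sum_mset_mono) auto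
    then have "Re e * of_nat (count ?M e) \<le> 1"
      using total by (simp add: sum_mset_delta[where c = "Re e"] if_distrib cong: if_cong)
    moreover have "1 \<le> count ?M e"
      using e by simp
    ultimately have "Re e \<le> 1"
      using eig[OF e] by (smt (verit) mult_le_cancel_left1 of_nat_1 of_nat_mono)
    then show ?thesis
      using eig[OF e] unfolding xlogx_def by (auto simp: mult_nonneg_nonpos)
  qed
  then have "(\<Sum>e\<in>#?M. xlogx (Re e)) \<le> (\<Sum>e\<in>#?M. 0)"
    by (intro sum_mset_mono) auto
  then show ?thesis
    unfolding vn_entropy_def by simp
qed

lemma vn_entropy_idempotent:
  fixes A :: "complex mat"
  assumes A: "A \<in> carrier_mat n n" and idem: "A * A = A"
  shows "vn_entropy A = 0"
proof -
  have cubic: "A * (A * A) + (0 * (1 - 0)) \<cdot>\<^sub>m A = A * A"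
    using A idem by auto
  have "xlogx (Re e) = 0" if "e \<in># proots (char_poly A)" for e
  proof -
    have "e \<in> {0, 1}"
      using eigenvalue_cubic_identity_roots[OF A cubic eigenvalue_if_in_proots_char_poly[OF A that]]
      by simp
    then show ?thesis
      by (auto simp: xlogx_def)
  qed
  then have "image_mset (\<lambda>e. xlogx (Re e)) (proots (char_poly A))
      = image_mset (\<lambda>_. 0) (proots (char_poly A))"
    by (intro image_mset_cong) (auto simp: xlogx_def)
  then show ?thesis
    unfolding vn_entropy_def by simp
qed

lemma nat_combination_eq_1_irrational:
  fixes a :: real and k m :: nat
  assumes irr: "a \<notin> \<rat>" and comb: "k * a + m * (1 - a) = 1"
  shows "k = 1 \<and> m = 1"
proof -
  have lin: "(real k - real m) * a = 1 - real m"
    using comb by (simp add: algebra_simps)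
  have "k = m"
  proof (rule ccontr)
    assume "k \<noteq> m"
    then have "a = (1 - real m) / (real k - real m)"
      using lin by (simp add: field_simps)
    then have "a \<in> \<rat>"
      by simp
    with irr show False ..
  qed
  then show ?thesis
    using lin by simp
qed

lemma vn_entropy_two_level:
  fixes A :: "complex mat" and a :: real
  assumes A: "A \<in> carrier_mat n n" and tr: "mtrace A = 1" and irr: "a \<notin> \<rat>"
    and cubic: "A * (A * A) + (of_real a * (1 - of_real a)) \<cdot>\<^sub>m A = A * A"
  shows "vn_entropy A = - xlogx a - xlogx (1 - a)"
proof -
  let ?M = "proots (char_poly A)"
  let ?S = "{0, complex_of_real a, complex_of_real (1 - a)}"
  have "(0 :: real) \<in> \<rat>" "(1 :: real) \<in> \<rat>" "(1 / 2 :: real) \<in> \<rat>"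
    by simp_all
  then have "a \<noteq> 0" "a \<noteq> 1" "a \<noteq> 1 / 2"
    using irr by metis+
  then have "a \<noteq> 1 - a"
    by linarith
  have distinct: "complex_of_real a \<noteq> 0" "complex_of_real (1 - a) \<noteq> 0"
    "complex_of_real a \<noteq> complex_of_real (1 - a)"
    using \<open>a \<noteq> 0\<close> \<open>a \<noteq> 1\<close> \<open>a \<noteq> 1 - a\<close>
    by (simp_all only: of_real_eq_iff of_real_eq_0_iff) simp_all
  have "set_mset ?M \<subseteq> ?S"
    using eigenvalue_cubic_identity_roots[OF A cubic] eigenvalue_if_in_proots_char_poly[OF A] by auto
  then have count: "(\<Sum>x\<in>#?M. f x) = of_nat (count ?M 0) * f 0
      + of_nat (count ?M (of_real a)) * f (of_real a)
      + of_nat (count ?M (of_real (1 - a))) * f (of_real (1 - a))"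
    for f :: "complex \<Rightarrow> 'b :: comm_semiring_1"
    using distinct by (subst sum_mset_eq_sum_count[of ?S]) (auto simp: add.assoc)
  have "complex_of_nat (count ?M (of_real a)) * of_real a
      + complex_of_nat (count ?M (of_real (1 - a))) * of_real (1 - a) = 1"
    using count[of "\<lambda>x. x"] sum_proots_char_poly[OF A] tr by simp
  from arg_cong[OF this, of Re]
  have "real (count ?M (of_real a)) * a + real (count ?M (of_real (1 - a))) * (1 - a) = 1"
    by simp
  then have "count ?M (of_real a) = 1 \<and> count ?M (of_real (1 - a)) = 1"
    by (rule nat_combination_eq_1_irrational[OF irr])
  then show ?thesis
    unfolding vn_entropy_def using count[of "\<lambda>x. xlogx (Re x)"] by (simp add: xlogx_def)
qed

lemma sqrt_13_irrational: "sqrt 13 \<notin> \<rat>"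
proof
  assume "sqrt 13 \<in> \<rat>"
  then have "sqrt 13 \<in> \<int>"
    by (intro rational_algebraic_int_is_int) auto
  then obtain k :: int where k: "sqrt 13 = of_int k"
    by (auto elim: Ints_cases)
  have "3 < sqrt (13 :: real)" "sqrt (13 :: real) < 4"
    by (auto intro!: real_less_rsqrt simp: real_sqrt_less_iff[of _ 16, simplified] real_less_lsqrt)
  then have "3 < k" "k < 4"
    unfolding k by simp_all
  then show False
    by simp
qed

lemma vn_entropy_cubic_identity_3_64:
  fixes A :: "complex mat"
  assumes A: "A \<in> carrier_mat n n" and tr: "mtrace A = 1"
    and cubic: "A * (A * A) + (3 / 64) \<cdot>\<^sub>m A = A * A"
  shows "vn_entropy A = - xlogx ((4 + sqrt 13) / 8) - xlogx ((4 - sqrt 13) / 8)"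
proof -
  define a where "a = (4 + sqrt 13) / 8"
  have irr: "a \<notin> \<rat>"
  proof
    assume "a \<in> \<rat>"
    then have "8 * a - 4 \<in> \<rat>"
      by (intro Rats_diff Rats_mult) auto
    moreover have "8 * a - 4 = sqrt 13"
      by (simp add: a_def field_simps)
    ultimately show False
      using sqrt_13_irrational by simp
  qed
  have "a * (1 - a) = 3 / 64"
    by (simp add: a_def field_simps power2_eq_square)
  then have prod: "complex_of_real a * (1 - complex_of_real a) = 3 / 64"
    by (metis of_real_1 of_real_diff of_real_mult of_real_divide of_real_numeral)
  have "vn_entropy A = - xlogx a - xlogx (1 - a)"
    using irr cubic[folded prod] by (rule vn_entropy_two_level[OF A tr])
  moreover have "1 - a = (4 - sqrt 13) / 8"
    by (simp add: a_def field_simps)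
  ultimately show ?thesis
    unfolding a_def by simp
qed

section \<open>Discord of pure three-qubit states\<close>

definition ket_bra :: "complex vec \<Rightarrow> complex mat" where
  "ket_bra \<psi> = mat 8 8 (\<lambda>(i, j). \<psi> $ i * cnj (\<psi> $ j))"

definition basis_proj :: "nat \<Rightarrow> nat \<Rightarrow> complex mat" where
  "basis_proj n x = mat n n (\<lambda>(i, k). if i = x \<and> k = x then 1 else 0)"

definition meas_cond_entropy :: "nat list \<Rightarrow> complex mat \<Rightarrow> complex mat list \<Rightarrow> real" where
  "meas_cond_entropy X \<rho> Es =
     (\<Sum>a<length Es. meas_prob X \<rho> (Es ! a) * vn_entropy (post_state X \<rho> (Es ! a)))"

lemma discord_eq_INF_meas_cond_entropy:
  "discord X \<rho> = (INF Es \<in> {Es. povm (2 ^ length X) Es}. meas_cond_entropy X \<rho> Es)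
     + vn_entropy (ptrace (compl_qubits X) \<rho>) - vn_entropy \<rho>"
  unfolding discord_def meas_cond_entropy_def ..

lemma rank_one_idempotent:
  fixes \<phi> :: "nat \<Rightarrow> complex"
  assumes norm: "c * (\<Sum>k<n. \<phi> k * cnj (\<phi> k)) = 1"
  defines "P \<equiv> mat n n (\<lambda>(i, j). c * (\<phi> i * cnj (\<phi> j)))"
  shows "P * P = P"
proof (rule eq_matI)
  fix i j assume "i < dim_row P" "j < dim_col P"
  then have ij: "i < n" "j < n"
    by (auto simp: P_def)
  have "(P * P) $$ (i, j) = (\<Sum>k<n. c * (\<phi> i * cnj (\<phi> k)) * (c * (\<phi> k * cnj (\<phi> j))))"
    using ij by (simp add: P_def scalar_prod_def atLeast0LessThan)
  also have "\<dots> = c * (\<phi> i * cnj (\<phi> j)) * (c * (\<Sum>k<n. \<phi> k * cnj (\<phi> k)))"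
    by (simp add: sum_distrib_left ac_simps)
  also have "\<dots> = P $$ (i, j)"
    using ij norm by (simp add: P_def)
  finally show "(P * P) $$ (i, j) = P $$ (i, j)" .
qed (auto simp: P_def)

lemma vn_entropy_ket_bra:
  assumes "(\<Sum>k<8. \<psi> $ k * cnj (\<psi> $ k)) = 1"
  shows "vn_entropy (ket_bra \<psi>) = 0"
proof (rule vn_entropy_idempotent[of _ 8])
  have "ket_bra \<psi> = mat 8 8 (\<lambda>(i, j). 1 * (\<psi> $ i * cnj (\<psi> $ j)))"
    unfolding ket_bra_def by simp
  then show "ket_bra \<psi> * ket_bra \<psi> = ket_bra \<psi>"
    using rank_one_idempotent[where c = 1 and n = 8 and \<phi> = "\<lambda>k. \<psi> $ k"] assms by simp
qed (simp add: ket_bra_def)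

lemma if_1_0_mult: "(if P then 1 else 0) * (a :: 'a :: semiring_1) = (if P then a else 0)"
  by simp

lemma basis_proj_psd:
  assumes x: "x < n"
  shows "psd_mat n (basis_proj n x)"
proof -
  have Pv: "basis_proj n x *\<^sub>v v = vec n (\<lambda>i. if i = x then v $ x else 0)"
    if "v \<in> carrier_vec n" for v :: "complex vec"
    using x that by (intro eq_vecI) (auto simp: basis_proj_def scalar_prod_def if_1_0_mult cong: if_cong)
  have "v \<bullet>c (basis_proj n x *\<^sub>v v) = v $ x * cnj (v $ x)" if "v \<in> carrier_vec n" for v
    using x that by (simp add: Pv scalar_prod_def if_distrib sum.If_cases cong: if_cong)
  moreover have "mat_adjoint (basis_proj n x) = basis_proj n x"
    by (rule eq_matI) (auto simp: mat_adjoint_def basis_proj_def mat_of_rows_index)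
  ultimately show ?thesis
    unfolding psd_mat_def by (auto simp: basis_proj_def complex_mult_cnj)
qed

lemma basis_proj_povm: "povm n (map (basis_proj n) [0..<n])"
  unfolding povm_def by (auto simp: basis_proj_psd) (auto simp: basis_proj_def sum.If_cases)

(* join x y is the basis index of the three qubits with the qubits X in state x and the others in
   state y: the identification of C^8 with C^dX \<otimes> C^dY. *)
locale qubit_split =
  fixes X :: "nat list" and join :: "nat \<Rightarrow> nat \<Rightarrow> nat" and dX dY :: nat
  assumes dX: "dX = 2 ^ length X" and dY: "dY = 2 ^ length (compl_qubits X)"
    and idx_less: "\<And>j. j < 8 \<Longrightarrow> sub_idx X j < dX"
    and compl_idx_less: "\<And>j. j < 8 \<Longrightarrow> sub_idx (compl_qubits X) j < dY"
    and join_idx: "\<And>j. j < 8 \<Longrightarrow> join (sub_idx X j) (sub_idx (compl_qubits X) j) = j"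
    and join_less: "\<And>x y. x < dX \<Longrightarrow> y < dY \<Longrightarrow> join x y < 8"
    and idx_join: "\<And>x y. x < dX \<Longrightarrow> y < dY \<Longrightarrow> sub_idx X (join x y) = x"
    and compl_idx_join: "\<And>x y. x < dX \<Longrightarrow> y < dY \<Longrightarrow> sub_idx (compl_qubits X) (join x y) = y"
begin

lemma sum_split: "(\<Sum>j<8. h j) = (\<Sum>x<dX. \<Sum>y<dY. h (join x y))"
proof -
  have "(\<Sum>j<8. h j) = (\<Sum>(x, y) \<in> {..<dX} \<times> {..<dY}. h (join x y))"
    by (rule sum.reindex_bij_witness[where j = "\<lambda>j. (sub_idx X j, sub_idx (compl_qubits X) j)"
          and i = "\<lambda>(x, y). join x y"])
       (auto simp: idx_less compl_idx_less join_idx join_less idx_join compl_idx_join)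
  then show ?thesis
    by (simp add: sum.cartesian_product)
qed

lemma ptrace_carrier: "ptrace X N \<in> carrier_mat dY dY"
  unfolding ptrace_def Let_def dY by simp

lemma ptrace_entry:
  assumes y: "y < dY" and y': "y' < dY"
  shows "ptrace X N $$ (y, y') = (\<Sum>x<dX. N $$ (join x y, join x y'))"
proof -
  have "ptrace X N $$ (y, y') = (\<Sum>j<8. \<Sum>j'<8. if sub_idx (compl_qubits X) j = y \<and>
      sub_idx (compl_qubits X) j' = y' \<and> sub_idx X j = sub_idx X j' then N $$ (j, j') else 0)"
    unfolding ptrace_def Let_def dY[symmetric] using y y' by simp
  also have "\<dots> = (\<Sum>x<dX. \<Sum>y1<dY. \<Sum>x'<dX. \<Sum>y1'<dY.
      if y1' = y' then if x' = x then if y1 = y then N $$ (join x y1, join x' y1') else 0 else 0 else 0)"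
    unfolding sum_split by (intro sum.cong refl) (auto simp: idx_join compl_idx_join)
  also have "\<dots> = (\<Sum>x<dX. N $$ (join x y, join x y'))"
    using y y' by simp
  finally show ?thesis .
qed

lemma ptrace_eq_mat: "ptrace X N = mat dY dY (\<lambda>(y, y'). \<Sum>x<dX. N $$ (join x y, join x y'))"
  using ptrace_carrier[of N] by (intro eq_matI) (auto simp: ptrace_entry)

lemma mtrace_ptrace:
  assumes "N \<in> carrier_mat 8 8"
  shows "mtrace (ptrace X N) = mtrace N"
proof -
  have "mtrace (ptrace X N) = (\<Sum>y<dY. \<Sum>x<dX. N $$ (join x y, join x y))"
    using ptrace_carrier[of N] unfolding mtrace_def by (simp add: ptrace_entry)
  also have "\<dots> = mtrace N"
    using assms unfolding mtrace_def by (subst sum.swap) (simp add: sum_split)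
  finally show ?thesis .
qed

lemma embed_op_carrier: "embed_op X E \<in> carrier_mat 8 8"
  unfolding embed_op_def Let_def by simp

lemma embed_op_mult_entry:
  assumes M: "M \<in> carrier_mat 8 8" and x: "x < dX" and y: "y < dY" and j: "j < 8"
  shows "(embed_op X E * M) $$ (join x y, j) = (\<Sum>x'<dX. E $$ (x, x') * M $$ (join x' y, j))"
proof -
  have "(embed_op X E * M) $$ (join x y, j) = (\<Sum>k<8. embed_op X E $$ (join x y, k) * M $$ (k, j))"
    using M embed_op_carrier[of E] join_less[OF x y] j by (simp add: scalar_prod_def atLeast0LessThan)
  also have "\<dots> = (\<Sum>x'<dX. \<Sum>y'<dY. if y' = y then E $$ (x, x') * M $$ (join x' y', j) else 0)"
    unfolding sum_split using x y
    by (intro sum.cong refl) (auto simp: embed_op_def Let_def join_less idx_join compl_idx_join)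
  also have "\<dots> = (\<Sum>x'<dX. E $$ (x, x') * M $$ (join x' y, j))"
    using y by simp
  finally show ?thesis .
qed

lemma ptrace_embed_ket_bra_entry:
  assumes "y < dY" and "y' < dY"
  shows "ptrace X (embed_op X E * ket_bra \<psi>) $$ (y, y') =
     (\<Sum>x<dX. \<Sum>x'<dX. E $$ (x, x') * (\<psi> $ join x' y * cnj (\<psi> $ join x y')))"
  using assms unfolding ptrace_entry[OF assms]
  by (intro sum.cong refl)
     (simp add: embed_op_mult_entry ket_bra_def join_less)

lemma ptrace_embed_ket_bra_form:
  fixes \<psi> :: "complex vec"
  assumes w: "w \<in> carrier_vec dY" and E: "E \<in> carrier_mat dX dX"
  defines "z \<equiv> vec dX (\<lambda>x. \<Sum>y<dY. cnj (w $ y) * \<psi> $ join x y)"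
  shows "w \<bullet>c (ptrace X (embed_op X E * ket_bra \<psi>) *\<^sub>v w) = z \<bullet>c (E *\<^sub>v z)"
proof -
  let ?t = "\<lambda>y y' x x'.
    w $ y * cnj (w $ y') * cnj (E $$ (x, x')) * cnj (\<psi> $ join x' y) * \<psi> $ join x y'"
  have "w \<bullet>c (ptrace X (embed_op X E * ket_bra \<psi>) *\<^sub>v w)
      = (\<Sum>y<dY. \<Sum>y'<dY. \<Sum>x<dX. \<Sum>x'<dX. ?t y y' x x')"
    using w ptrace_carrier[of "embed_op X E * ket_bra \<psi>"]
    by (simp add: scalar_prod_def atLeast0LessThan ptrace_embed_ket_bra_entry cnj_sum
        sum_distrib_left sum_distrib_right ac_simps)
  also have "\<dots> = (\<Sum>y<dY. \<Sum>x<dX. \<Sum>y'<dY. \<Sum>x'<dX. ?t y y' x x')"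
    by (intro sum.cong refl sum.swap)
  also have "\<dots> = (\<Sum>x<dX. \<Sum>y<dY. \<Sum>x'<dX. \<Sum>y'<dY. ?t y y' x x')"
    by (subst sum.swap) (intro sum.cong refl sum.swap)
  also have "\<dots> = (\<Sum>x<dX. \<Sum>x'<dX. \<Sum>y<dY. \<Sum>y'<dY. ?t y y' x x')"
    by (intro sum.cong refl sum.swap)
  also have "\<dots> = z \<bullet>c (E *\<^sub>v z)"
    using E unfolding z_def
    by (simp add: scalar_prod_def atLeast0LessThan cnj_sum sum_distrib_left sum_distrib_right ac_simps)
  finally show ?thesis .
qed

lemma psd_form_ptrace_embed_ket_bra:
  assumes E: "psd_mat dX E"
  shows "psd_form dY (ptrace X (embed_op X E * ket_bra \<psi>))"
proof -
  have "E \<in> carrier_mat dX dX"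
    using E unfolding psd_mat_def by simp
  then have "Im (w \<bullet>c (ptrace X (embed_op X E * ket_bra \<psi>) *\<^sub>v w)) = 0 \<and>
      0 \<le> Re (w \<bullet>c (ptrace X (embed_op X E * ket_bra \<psi>) *\<^sub>v w))" if "w \<in> carrier_vec dY" for w
    using E that unfolding psd_mat_def by (simp add: ptrace_embed_ket_bra_form)
  then show ?thesis
    unfolding psd_form_def using ptrace_carrier by blast
qed

lemma mtrace_ptrace_embed_ket_bra:
  assumes "psd_mat dX E"
  shows "mtrace (ptrace X (embed_op X E * ket_bra \<psi>)) = complex_of_real (meas_prob X (ket_bra \<psi>) E)
    \<and> 0 \<le> meas_prob X (ket_bra \<psi>) E"
proof -
  have "mtrace (ptrace X (embed_op X E * ket_bra \<psi>)) = mtrace (embed_op X E * ket_bra \<psi>)"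
    using embed_op_carrier[of E] by (intro mtrace_ptrace) (simp add: ket_bra_def)
  moreover have "Im (mtrace (ptrace X (embed_op X E * ket_bra \<psi>))) = 0 \<and>
      0 \<le> Re (mtrace (ptrace X (embed_op X E * ket_bra \<psi>)))"
    using psd_form_mtrace[OF psd_form_ptrace_embed_ket_bra[OF assms]] .
  ultimately show ?thesis
    unfolding meas_prob_def by (simp add: complex_eq_iff)
qed

lemma meas_prob_mult_vn_entropy_nonneg:
  assumes E: "psd_mat dX E"
  shows "0 \<le> meas_prob X (ket_bra \<psi>) E * vn_entropy (post_state X (ket_bra \<psi>) E)"
proof (cases "meas_prob X (ket_bra \<psi>) E = 0")
  case False
  let ?p = "meas_prob X (ket_bra \<psi>) E"
  let ?M = "ptrace X (embed_op X E * ket_bra \<psi>)"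
  have tr: "mtrace ?M = complex_of_real ?p" and "0 < ?p"
    using mtrace_ptrace_embed_ket_bra[OF E, of \<psi>] False by auto
  have "psd_form dY (post_state X (ket_bra \<psi>) E)"
    unfolding post_state_def using \<open>0 < ?p\<close>
    by (intro psd_form_smult psd_form_ptrace_embed_ket_bra E) simp
  moreover have "mtrace (post_state X (ket_bra \<psi>) E) = 1"
    unfolding post_state_def using False tr ptrace_carrier[of "embed_op X E * ket_bra \<psi>"]
    by (simp add: mtrace_smult flip: of_real_mult)
  ultimately show ?thesis
    using \<open>0 < ?p\<close> vn_entropy_nonneg by simp
qed simp

lemma meas_cond_entropy_nonneg:
  assumes "povm dX Es"
  shows "0 \<le> meas_cond_entropy X (ket_bra \<psi>) Es"
  unfolding meas_cond_entropy_def
proof (rule sum_nonneg)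
  fix a assume "a \<in> {..<length Es}"
  then have "psd_mat dX (Es ! a)"
    using assms unfolding povm_def by simp
  then show "0 \<le> meas_prob X (ket_bra \<psi>) (Es ! a) * vn_entropy (post_state X (ket_bra \<psi>) (Es ! a))"
    by (rule meas_prob_mult_vn_entropy_nonneg)
qed

lemma meas_prob_mult_vn_entropy_basis_proj:
  assumes x: "x < dX"
  shows "meas_prob X (ket_bra \<psi>) (basis_proj dX x)
    * vn_entropy (post_state X (ket_bra \<psi>) (basis_proj dX x)) = 0"
proof (cases "meas_prob X (ket_bra \<psi>) (basis_proj dX x) = 0")
  case False
  let ?p = "meas_prob X (ket_bra \<psi>) (basis_proj dX x)"
  let ?N = "embed_op X (basis_proj dX x) * ket_bra \<psi>"
  let ?M = "ptrace X ?N"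
  let ?c = "complex_of_real (1 / ?p)"
  let ?\<phi> = "\<lambda>y. \<psi> $ join x y"
  have M: "?M $$ (y, y') = ?\<phi> y * cnj (?\<phi> y')" if "y < dY" "y' < dY" for y y'
  proof -
    have "?M $$ (y, y') = (\<Sum>x1<dX. \<Sum>x2<dX.
        if x2 = x then if x1 = x then \<psi> $ join x2 y * cnj (\<psi> $ join x1 y') else 0 else 0)"
      unfolding ptrace_embed_ket_bra_entry[OF that] by (intro sum.cong refl) (auto simp: basis_proj_def)
    then show ?thesis
      using x by simp
  qed
  have "(\<Sum>y<dY. ?\<phi> y * cnj (?\<phi> y)) = complex_of_real ?p"
    using mtrace_ptrace_embed_ket_bra[OF basis_proj_psd[OF x], of \<psi>] ptrace_carrier[of ?N]
    unfolding mtrace_def by (simp add: M)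
  then have norm: "?c * (\<Sum>y<dY. ?\<phi> y * cnj (?\<phi> y)) = 1"
    using False by (simp flip: of_real_mult)
  have "post_state X (ket_bra \<psi>) (basis_proj dX x) = mat dY dY (\<lambda>(i, j). ?c * (?\<phi> i * cnj (?\<phi> j)))"
    unfolding post_state_def using ptrace_carrier[of ?N] by (intro eq_matI) (auto simp: M)
  then have "vn_entropy (post_state X (ket_bra \<psi>) (basis_proj dX x)) = 0"
    using rank_one_idempotent[OF norm] by (intro vn_entropy_idempotent[of _ dY]) auto
  then show ?thesis
    by simp
qed simp

lemma INF_meas_cond_entropy_ket_bra:
  "(INF Es \<in> {Es. povm dX Es}. meas_cond_entropy X (ket_bra \<psi>) Es) = 0"
proof (rule cInf_eq_minimum)
  have "meas_cond_entropy X (ket_bra \<psi>) (map (basis_proj dX) [0..<dX]) = 0"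
    unfolding meas_cond_entropy_def by (simp add: meas_prob_mult_vn_entropy_basis_proj)
  then show "0 \<in> meas_cond_entropy X (ket_bra \<psi>) ` {Es. povm dX Es}"
    using basis_proj_povm by (metis image_eqI mem_Collect_eq)
qed (auto intro: meas_cond_entropy_nonneg)

lemma discord_ket_bra:
  "discord X (ket_bra \<psi>) = vn_entropy (ptrace (compl_qubits X) (ket_bra \<psi>)) - vn_entropy (ket_bra \<psi>)"
  using INF_meas_cond_entropy_ket_bra unfolding discord_eq_INF_meas_cond_entropy dX by simp

end

section \<open>The state rho_2\<close>

lemma nat_less_2_iff: "(j :: nat) < 2 \<longleftrightarrow> j \<in> {0, 1}"
  and nat_less_4_iff: "(j :: nat) < 4 \<longleftrightarrow> j \<in> {0, 1, 2, 3}"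
  and nat_less_8_iff: "(j :: nat) < 8 \<longleftrightarrow> j \<in> {0, 1, 2, 3, 4, 5, 6, 7}"
  by auto

lemma sub_idx_singleton: "sub_idx [a] j = qbit j a"
  by (simp add: sub_idx_def)

lemma sub_idx_pair: "sub_idx [a, b] j = 2 * qbit j a + qbit j b"
  by (simp add: sub_idx_def lessThan_nat_numeral)

lemmas qubit_split_simps = compl_qubits_def sub_idx_singleton sub_idx_pair qbit_def
  nat_less_2_iff nat_less_4_iff nat_less_8_iff

interpretation q0: qubit_split "[0]" "\<lambda>x y. 4 * x + y" 2 4
  by unfold_locales (auto simp: qubit_split_simps)
interpretation q1: qubit_split "[1]" "\<lambda>x y. 4 * (y div 2) + 2 * x + y mod 2" 2 4
  by unfold_locales (auto simp: qubit_split_simps)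
interpretation q2: qubit_split "[2]" "\<lambda>x y. 2 * y + x" 2 4
  by unfold_locales (auto simp: qubit_split_simps)
interpretation q01: qubit_split "[0, 1]" "\<lambda>x y. 2 * x + y" 4 2
  by unfold_locales (auto simp: qubit_split_simps)
interpretation q02: qubit_split "[0, 2]" "\<lambda>x y. 4 * (x div 2) + 2 * y + x mod 2" 4 2
  by unfold_locales (auto simp: qubit_split_simps)
interpretation q12: qubit_split "[1, 2]" "\<lambda>x y. 4 * y + x" 4 2
  by unfold_locales (auto simp: qubit_split_simps)

lemma compl_qubits_eq:
  "compl_qubits [0] = [1, 2]" "compl_qubits [1] = [0, 2]" "compl_qubits [2] = [0, 1]"
  "compl_qubits [0, 1] = [2]" "compl_qubits [0, 2] = [1]" "compl_qubits [1, 2] = [0]"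
  by (simp_all add: compl_qubits_def)

lemma rho2_eq_ket_bra: "rho2 = ket_bra psi2"
  unfolding rho2_def ket_bra_def ..

lemma rho2_entry:
  assumes "i < 8" "j < 8"
  shows "rho2 $$ (i, j) = (if i = 7 then 5 else 1) * (if j = 7 then 5 else 1) / 32"
proof -
  have "complex_of_real (sqrt 2) * complex_of_real (sqrt 2) = 2"
    by (simp flip: of_real_mult)
  then show ?thesis
    using assms unfolding rho2_def psi2_def by (simp add: field_simps)
qed

lemma psi2_normalized: "(\<Sum>k<8. psi2 $ k * cnj (psi2 $ k)) = 1"
proof -
  have "(\<Sum>k<8. psi2 $ k * cnj (psi2 $ k)) = (\<Sum>k<8. rho2 $$ (k, k))"
    by (intro sum.cong) (auto simp: rho2_def)
  then show ?thesis
    by (simp add: rho2_entry lessThan_nat_numeral)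
qed

definition rho2_qubit :: "complex mat" where
  "rho2_qubit = mat_of_rows_list 2 [[1/8, 1/4], [1/4, 7/8]]"

definition rho2_two_qubits :: "complex mat" where
  "rho2_two_qubits = mat_of_rows_list 4
     [[1/16, 1/16, 1/16, 3/16], [1/16, 1/16, 1/16, 3/16], [1/16, 1/16, 1/16, 3/16], [3/16, 3/16, 3/16, 13/16]]"

lemma ptrace_rho2:
  "ptrace [1, 2] rho2 = rho2_qubit" "ptrace [0, 2] rho2 = rho2_qubit" "ptrace [0, 1] rho2 = rho2_qubit"
  "ptrace [2] rho2 = rho2_two_qubits" "ptrace [1] rho2 = rho2_two_qubits" "ptrace [0] rho2 = rho2_two_qubits"
  unfolding q12.ptrace_eq_mat q02.ptrace_eq_mat q01.ptrace_eq_mat q2.ptrace_eq_mat q1.ptrace_eq_mat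
    q0.ptrace_eq_mat rho2_qubit_def rho2_two_qubits_def
  by (auto simp: mat_of_rows_list_def nat_less_2_iff nat_less_4_iff rho2_entry lessThan_nat_numeral
      intro!: cong_mat)

lemma rho2_qubit_cubic:
  "rho2_qubit \<in> carrier_mat 2 2" "mtrace rho2_qubit = 1"
  "rho2_qubit * (rho2_qubit * rho2_qubit) + (3 / 64) \<cdot>\<^sub>m rho2_qubit = rho2_qubit * rho2_qubit"
  unfolding rho2_qubit_def
  by (auto simp: mat_of_rows_list_def mtrace_def lessThan_nat_numeral nat_less_2_iff
      scalar_prod_def atLeast0LessThan intro!: eq_matI)

lemma rho2_two_qubits_cubic:
  "rho2_two_qubits \<in> carrier_mat 4 4" "mtrace rho2_two_qubits = 1"
  "rho2_two_qubits * (rho2_two_qubits * rho2_two_qubits) + (3 / 64) \<cdot>\<^sub>m rho2_two_qubits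
     = rho2_two_qubits * rho2_two_qubits"
  unfolding rho2_two_qubits_def
  by (auto simp: mat_of_rows_list_def mtrace_def lessThan_nat_numeral less_Suc_eq nat_less_4_iff
      scalar_prod_def atLeast0LessThan intro!: eq_matI)

theorem lemma2:
  defines "v \<equiv> - (1/8) * (4 + sqrt 13) * log 2 ((1/8) * (4 + sqrt 13))
               - (1/8) * (4 - sqrt 13) * log 2 ((1/8) * (4 - sqrt 13))"
  shows "discord [0] rho2 = discord [1] rho2 \<and>
         discord [1] rho2 = discord [2] rho2 \<and>
         discord [2] rho2 = discord [0, 1] rho2 \<and>
         discord [0, 1] rho2 = discord [0, 2] rho2 \<and>
         discord [0, 2] rho2 = discord [1, 2] rho2 \<and>
         discord [1, 2] rho2 = v"
proof -
  have "vn_entropy rho2 = 0"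
    unfolding rho2_eq_ket_bra using psi2_normalized by (rule vn_entropy_ket_bra)
  then have discord_rho2: "discord X rho2 = vn_entropy (ptrace (compl_qubits X) rho2)"
    if "qubit_split X join dX dY" for X join dX dY
    using qubit_split.discord_ket_bra[OF that, of psi2] unfolding rho2_eq_ket_bra by simp
  have "vn_entropy rho2_qubit = v" "vn_entropy rho2_two_qubits = v"
    using vn_entropy_cubic_identity_3_64[OF rho2_qubit_cubic]
      vn_entropy_cubic_identity_3_64[OF rho2_two_qubits_cubic]
    unfolding v_def xlogx_def by simp_all
  then show ?thesis
    unfolding discord_rho2[OF q0.qubit_split_axioms] discord_rho2[OF q1.qubit_split_axioms]
      discord_rho2[OF q2.qubit_split_axioms] discord_rho2[OF q01.qubit_split_axioms]
      discord_rho2[OF q02.qubit_split_axioms] discord_rho2[OF q12.qubit_split_axioms]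
      compl_qubits_eq ptrace_rho2
    by simp
qed

end
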